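(* Let $a,b,c\in\mathbb C$ with $c=a-b+1$. If $a$ is a negative integer, assume $c\notin\{a,a+1,\dots,0,1\}$; otherwise assume $2-c\notin\{1,2,3,\dots\}$. Set \[ f(z)=F(a,b+1;c+1;z),\quad g(z)=F(a,b-1;c-1;z),\quad h(z)=F(a,b;c;z). \] Then \[ z\big(f(z)g'(z)-f'(z)g(z)\big)=c\big(f(z)g(z)-h(z)^2\big) \] for all $z\in\mathbb C$ when $a$ is a negative integer, and for all $z\in\mathbb D$ otherwise.
   Context: The hypergeometric function is $F(a,b;c;z)=\sum_{k\ge0}\frac{(a)_k(b)_k}{(c)_k}\frac{z^k}{k!}$, where $(x)_0=1$ and $(x)_k=x(x+1)\cdots(x+k-1)$. It is defined for $|z|<1$ when $1-c\notin\{1,2,\dots\}$; when $a=-n$ with $n\in\mathbb N$ the series terminates at $k=n$ and defines a polynomial for all $z\in\mathbb C$ whenever $c\notin\{0,-1,\dots,1-n\}$. $\mathbb D=\{|z|<1\}$. *)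

theory Defs
  imports "HOL-Analysis.Analysis"
begin

text \<open>As an infinite sum; in the terminating case (a = -n) all terms with k > n vanish,
  so it equals the polynomial for every z.\<close>
definition hyp2F1 :: "complex \<Rightarrow> complex \<Rightarrow> complex \<Rightarrow> complex \<Rightarrow> complex" where
  "hyp2F1 a b c z =
     (\<Sum>k. pochhammer a k * pochhammer b k / pochhammer c k * z ^ k / fact k)"

end

theory Submission
  imports Defs
begin

text \<open>All three series are power series at 0, so it suffices to prove the identity for the
  formal power series F = F(a,b+1;c+1), G = F(a,b-1;c-1), H = F(a,b;c) and then evaluate.
  Gauss' contiguous relation c H = (c - a X) F + X(1 - X) F' (and its shift
  (c - 1) G = (c - 1 - a X) H + X(1 - X) H') expresses G and H through F and its
  derivatives; the hypergeometric equation for F eliminates F'', and with b = a - c + 1 what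
  remains is a polynomial identity. The series terminate when a is a negative integer and
  otherwise converge on the unit disc, where evaluation is a ring homomorphism.\<close>

definition hyp2F1_coeff :: "complex \<Rightarrow> complex \<Rightarrow> complex \<Rightarrow> nat \<Rightarrow> complex" where
  "hyp2F1_coeff a b c k = pochhammer a k * pochhammer b k / pochhammer c k / fact k"

text \<open>The denominator (c)_k vanishes only at indices where the numerator (a)_k does,
  so the ratio recurrence of the coefficients holds despite the junk value x / 0 = 0.\<close>
definition hyp2F1_admissible :: "complex \<Rightarrow> complex \<Rightarrow> bool" where
  "hyp2F1_admissible a c \<longleftrightarrow> (\<forall>k. c + of_nat k = 0 \<longrightarrow> pochhammer a (Suc k) = 0)"

definition hyp2F1_fps :: "complex \<Rightarrow> complex \<Rightarrow> complex \<Rightarrow> complex fps" where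
  "hyp2F1_fps a b c = Abs_fps (hyp2F1_coeff a b c)"

lemma hyp2F1_coeff_0 [simp]: "hyp2F1_coeff a b c 0 = 1"
  by (simp add: hyp2F1_coeff_def)

lemma hyp2F1_coeff_eq_0: "pochhammer a k = 0 \<Longrightarrow> hyp2F1_coeff a b c k = 0"
  by (simp add: hyp2F1_coeff_def)

lemma hyp2F1_admissible_terminating:
  assumes "a = - of_nat n" and "\<And>k. k < n \<Longrightarrow> c \<noteq> - of_nat k"
  shows "hyp2F1_admissible a c"
  unfolding hyp2F1_admissible_def
proof (intro allI impI)
  fix k assume "c + of_nat k = 0"
  then have "\<not> k < n" using assms(2) by (auto simp: eq_neg_iff_add_eq_0)
  then show "pochhammer a (Suc k) = 0" unfolding assms(1) pochhammer_of_nat_eq_0_iff by simp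
qed

lemma hyp2F1_coeff_Suc:
  assumes "hyp2F1_admissible a c"
  shows "hyp2F1_coeff a b c (Suc k) * ((c + of_nat k) * of_nat (Suc k))
       = hyp2F1_coeff a b c k * ((a + of_nat k) * (b + of_nat k))"
proof (cases "pochhammer c k = 0")
  case True
  then obtain j where j: "j < k" "c + of_nat j = 0" by (auto simp: pochhammer_eq_0_iff)
  then have "pochhammer a (Suc j) = 0" using assms by (auto simp: hyp2F1_admissible_def)
  then have "pochhammer a k = 0" "pochhammer a (Suc k) = 0"
    using j pochhammer_eq_0_mono by (metis Suc_leI, metis Suc_leI le_SucI)
  then show ?thesis by (simp add: hyp2F1_coeff_eq_0)
next
  case False
  show ?thesis
  proof (cases "c + of_nat k = 0")
    case True
    then have "pochhammer a k * (a + of_nat k) = 0"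
      using assms by (auto simp: hyp2F1_admissible_def pochhammer_Suc)
    then show ?thesis using True by (auto simp: hyp2F1_coeff_def)
  next
    case False2: False
    have "of_nat (Suc k) \<noteq> (0::complex)" by (rule of_nat_neq_0)
    with False False2 have "hyp2F1_coeff a b c (Suc k)
      = hyp2F1_coeff a b c k * ((a + of_nat k) * (b + of_nat k)) / ((c + of_nat k) * of_nat (Suc k))"
      unfolding hyp2F1_coeff_def pochhammer_Suc fact_Suc by (simp add: field_simps)
    with False2 \<open>of_nat (Suc k) \<noteq> 0\<close> show ?thesis by simp
  qed
qed

lemma hyp2F1_recurrence_unique:
  fixes s t :: "nat \<Rightarrow> complex"
  assumes "hyp2F1_admissible a c"
    and "\<And>k. s (Suc k) * ((c + of_nat k) * of_nat (Suc k)) = s k * ((a + of_nat k) * (b + of_nat k))"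
    and "\<And>k. t (Suc k) * ((c + of_nat k) * of_nat (Suc k)) = t k * ((a + of_nat k) * (b + of_nat k))"
    and "\<And>k. pochhammer a k = 0 \<Longrightarrow> s k = 0"
    and "\<And>k. pochhammer a k = 0 \<Longrightarrow> t k = 0"
    and "s 0 = t 0"
  shows "s k = t k"
proof (induction k)
  case 0
  show ?case using assms(6) .
next
  case (Suc k)
  show ?case
  proof (cases "c + of_nat k = 0")
    case True
    then have "pochhammer a (Suc k) = 0" using assms(1) by (auto simp: hyp2F1_admissible_def)
    then show ?thesis using assms(4,5) by simp
  next
    case False
    have "(c + of_nat k) * of_nat (Suc k) \<noteq> 0" using False of_nat_neq_0 by simp
    moreover have "s (Suc k) * ((c + of_nat k) * of_nat (Suc k)) = t (Suc k) * ((c + of_nat k) * of_nat (Suc k))"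
      using assms(2,3) Suc by simp
    ultimately show ?thesis by simp
  qed
qed

lemma contiguous_shift_recurrence:
  fixes a b c :: complex and f :: "nat \<Rightarrow> complex"
  assumes frec: "\<And>k. f (Suc k) * ((c + 1 + of_nat k) * of_nat (Suc k))
                     = f k * ((a + of_nat k) * (b + 1 + of_nat k))"
  defines "e k \<equiv> (c + of_nat k) * f k - (if k = 0 then 0 else (a + of_nat (k-1)) * f (k-1))"
  shows "e (Suc k) * ((c + of_nat k) * of_nat (Suc k)) = e k * ((a + of_nat k) * (b + of_nat k))"
proof -
  have e_Suc: "e (Suc k) * of_nat (Suc k) = b * (a + of_nat k) * f k"
  proof -
    have "e (Suc k) * of_nat (Suc k)
        = (c + 1 + of_nat k) * of_nat (Suc k) * f (Suc k) - (a + of_nat k) * of_nat (Suc k) * f k"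
      by (simp add: e_def algebra_simps)
    also have "\<dots> = f k * ((a + of_nat k) * (b + 1 + of_nat k)) - (a + of_nat k) * of_nat (Suc k) * f k"
      using frec[of k] by (simp add: algebra_simps)
    finally show ?thesis by (simp add: algebra_simps)
  qed
  have e_b: "e k * (b + of_nat k) = b * (c + of_nat k) * f k"
  proof (cases k)
    case 0 then show ?thesis by (simp add: e_def)
  next
    case (Suc m)
    have "e k * (b + of_nat k)
        = (c + 1 + of_nat m) * (b + 1 + of_nat m) * f (Suc m) - f m * ((a + of_nat m) * (b + 1 + of_nat m))"
      using Suc by (simp add: e_def algebra_simps)
    also have "\<dots> = (c + 1 + of_nat m) * (b + 1 + of_nat m) * f (Suc m)
        - f (Suc m) * ((c + 1 + of_nat m) * of_nat (Suc m))"
      using frec[of m] by simp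
    finally show ?thesis using Suc by (simp add: algebra_simps)
  qed
  have "e (Suc k) * ((c + of_nat k) * of_nat (Suc k)) = (c + of_nat k) * (e (Suc k) * of_nat (Suc k))"
    by (simp add: algebra_simps)
  also have "\<dots> = (a + of_nat k) * (e k * (b + of_nat k))"
    unfolding e_Suc e_b by (simp add: algebra_simps)
  finally show ?thesis by (simp add: algebra_simps)
qed

text \<open>The right-hand side, extended by the value c at index 0, obeys the coefficient recurrence
  of F(a,b;c).\<close>
lemma hyp2F1_contiguous_coeff:
  fixes a b c :: complex
  assumes adm: "hyp2F1_admissible a c" and adm_succ: "hyp2F1_admissible a (c+1)"
  defines "f \<equiv> hyp2F1_coeff a (b+1) (c+1)"
  shows "c * hyp2F1_coeff a b c (Suc k) = (c + of_nat (Suc k)) * f (Suc k) - (a + of_nat k) * f k"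
proof -
  define e where "e k = (c + of_nat k) * f k - (if k = 0 then 0 else (a + of_nat (k-1)) * f (k-1))" for k
  have "e k = c * hyp2F1_coeff a b c k" for k
  proof (rule hyp2F1_recurrence_unique[OF adm])
    show "e (Suc k) * ((c + of_nat k) * of_nat (Suc k)) = e k * ((a + of_nat k) * (b + of_nat k))" for k
      unfolding e_def f_def using hyp2F1_coeff_Suc[OF adm_succ]
      by (intro contiguous_shift_recurrence) (simp add: add.assoc)
    show "c * hyp2F1_coeff a b c (Suc k) * ((c + of_nat k) * of_nat (Suc k))
        = c * hyp2F1_coeff a b c k * ((a + of_nat k) * (b + of_nat k))" for k
      using hyp2F1_coeff_Suc[OF adm, of b k] by (simp only: mult.assoc)
    show "e k = 0" if "pochhammer a k = 0" for k
    proof (cases k)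
      case (Suc m)
      then have "pochhammer a m * (a + of_nat m) = 0" using that by (simp add: pochhammer_Suc)
      then show ?thesis using Suc that by (auto simp: e_def f_def hyp2F1_coeff_def)
    qed (use that in simp)
    show "c * hyp2F1_coeff a b c k = 0" if "pochhammer a k = 0" for k
      using that by (simp add: hyp2F1_coeff_eq_0)
    show "e 0 = c * hyp2F1_coeff a b c 0" by (simp add: e_def f_def)
  qed
  from this[of "Suc k"] show ?thesis by (simp add: e_def)
qed

lemma hyp2F1_fps_contiguous:
  assumes "hyp2F1_admissible a c" and "hyp2F1_admissible a (c+1)"
  shows "fps_const c * hyp2F1_fps a b c
       = (fps_const c - fps_const a * fps_X) * hyp2F1_fps a (b+1) (c+1)
         + fps_X * (1 - fps_X) * fps_deriv (hyp2F1_fps a (b+1) (c+1))"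
proof (rule fps_ext)
  fix k
  show "fps_nth (fps_const c * hyp2F1_fps a b c) k = fps_nth
      ((fps_const c - fps_const a * fps_X) * hyp2F1_fps a (b+1) (c+1)
        + fps_X * (1 - fps_X) * fps_deriv (hyp2F1_fps a (b+1) (c+1))) k"
  proof (cases k)
    case (Suc m)
    then show ?thesis
      using hyp2F1_contiguous_coeff[OF assms, where b=b and k=m]
      by (cases m) (simp_all add: hyp2F1_fps_def algebra_simps)
  qed (simp add: hyp2F1_fps_def)
qed

lemma hyp2F1_fps_ode:
  assumes "hyp2F1_admissible a c"
  shows "fps_X * (1 - fps_X) * fps_deriv (fps_deriv (hyp2F1_fps a b c))
       = fps_const (a*b) * hyp2F1_fps a b c
         - (fps_const c - fps_const (a+b+1) * fps_X) * fps_deriv (hyp2F1_fps a b c)"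
proof (rule fps_ext)
  fix k
  define f where "f = hyp2F1_coeff a b c"
  have lhs: "fps_nth (fps_X * (1 - fps_X) * fps_deriv (fps_deriv (hyp2F1_fps a b c))) k
      = of_nat k * of_nat (Suc k) * f (Suc k) - (of_nat k - 1) * of_nat k * f k"
  proof (cases k)
    case (Suc m)
    then show ?thesis by (cases m) (simp_all add: f_def hyp2F1_fps_def algebra_simps)
  qed (simp add: f_def hyp2F1_fps_def)
  have rhs: "fps_nth (fps_const (a*b) * hyp2F1_fps a b c
        - (fps_const c - fps_const (a+b+1) * fps_X) * fps_deriv (hyp2F1_fps a b c)) k
      = a * b * f k - c * of_nat (Suc k) * f (Suc k) + (a+b+1) * of_nat k * f k"
    by (cases k) (simp_all add: f_def hyp2F1_fps_def algebra_simps)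
  have "f (Suc k) * ((c + of_nat k) * of_nat (Suc k)) = f k * ((a + of_nat k) * (b + of_nat k))"
    unfolding f_def by (rule hyp2F1_coeff_Suc[OF assms])
  then show "fps_nth (fps_X * (1 - fps_X) * fps_deriv (fps_deriv (hyp2F1_fps a b c))) k
      = fps_nth (fps_const (a*b) * hyp2F1_fps a b c
        - (fps_const c - fps_const (a+b+1) * fps_X) * fps_deriv (hyp2F1_fps a b c)) k"
    unfolding lhs rhs by (simp add: algebra_simps)
qed

lemma deriv_contiguous_by_ode:
  fixes F F1 F2 H1 X a b c :: "'a::comm_ring_1"
  assumes "c*H1 = -a*F + (c - a*X)*F1 + (1-X-X)*F1 + X*(1-X)*F2"
    and "X*(1-X)*F2 = a*(b+1)*F - (c+1 - (a+(b+1)+1)*X)*F1"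
  shows "c*H1 = b*(a*F + X*F1)"
proof -
  have "c*H1 = -a*F + (c - a*X)*F1 + (1-X-X)*F1 + (a*(b+1)*F - (c+1 - (a+(b+1)+1)*X)*F1)"
    unfolding assms ..
  then show ?thesis by (simp add: algebra_simps)
qed

lemma wronskian_by_contiguous:
  fixes F F1 F2 H H1 H2 G G1 X a b c :: "'a::comm_ring_1"
  assumes hb: "b = a - c + 1"
    and h1: "c*H = (c - a*X)*F + X*(1-X)*F1"
    and hH1: "c*H1 = b*(a*F + X*F1)"
    and hH2: "c*H2 = b*((a+1)*F1 + X*F2)"
    and h2: "(c-1)*G = (c-1-a*X)*H + X*(1-X)*H1"
    and h2': "(c-1)*G1 = -a*H + (c-1-a*X)*H1 + (1-X-X)*H1 + X*(1-X)*H2"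
    and ode: "X*(1-X)*F2 = a*(b+1)*F - (c+1 - (a+(b+1)+1)*X)*F1"
  shows "c*(c-1)*(X*(F*G1 - F1*G)) = c*(c-1)*(c*(F*G - H*H))"
proof -
  have G1: "c*(c-1)*G1 = -a*((c - a*X)*F + X*(1-X)*F1) + (c-(a+2)*X)*(b*(a*F + X*F1))
       + b*(a+1)*X*(1-X)*F1 + b*X*(a*(b+1)*F - (c+1 - (a+(b+1)+1)*X)*F1)"
  proof -
    have "c*(c-1)*G1 = c*((c-1)*G1)" by (simp add: algebra_simps)
    also have "\<dots> = -a*(c*H) + (c-(a+2)*X)*(c*H1) + X*(1-X)*(c*H2)"
      unfolding h2' by (simp add: algebra_simps)
    also have "\<dots> = -a*((c - a*X)*F + X*(1-X)*F1) + (c-(a+2)*X)*(b*(a*F + X*F1))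
       + X*(1-X)*(b*((a+1)*F1 + X*F2))"
      by (simp only: h1 hH1 hH2)
    also have "\<dots> = -a*((c - a*X)*F + X*(1-X)*F1) + (c-(a+2)*X)*(b*(a*F + X*F1))
       + b*(a+1)*X*(1-X)*F1 + b*X*(X*(1-X)*F2)"
      by (simp add: algebra_simps)
    finally show ?thesis by (simp only: ode)
  qed
  have G: "c*(c-1)*G = (c-1-a*X)*((c - a*X)*F + X*(1-X)*F1) + X*(1-X)*(b*(a*F + X*F1))"
  proof -
    have "c*(c-1)*G = c*((c-1)*G)" by (simp add: algebra_simps)
    also have "\<dots> = (c-1-a*X)*(c*H) + X*(1-X)*(c*H1)"
      unfolding h2 by (simp add: algebra_simps)
    finally show ?thesis by (simp only: h1 hH1)
  qed
  have "c*(c-1)*(X*(F*G1 - F1*G)) = X*(F*(c*(c-1)*G1) - F1*(c*(c-1)*G))"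
    by (simp add: algebra_simps)
  also have "\<dots> = c*F*(c*(c-1)*G) - (c-1)*(c*H)^2"
    unfolding G G1 h1 hb by (simp add: algebra_simps power2_eq_square)
  also have "\<dots> = c*(c-1)*(c*(F*G - H*H))"
    by (simp add: algebra_simps power2_eq_square)
  finally show ?thesis .
qed

lemma hyp2F1_fps_wronskian:
  assumes "c \<noteq> 0" and "c \<noteq> 1" and "b = a - c + 1"
    and adm_pred: "hyp2F1_admissible a (c-1)" and adm: "hyp2F1_admissible a c"
    and adm_succ: "hyp2F1_admissible a (c+1)"
  shows "fps_X * (hyp2F1_fps a (b+1) (c+1) * fps_deriv (hyp2F1_fps a (b-1) (c-1))
            - fps_deriv (hyp2F1_fps a (b+1) (c+1)) * hyp2F1_fps a (b-1) (c-1))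
       = fps_const c * (hyp2F1_fps a (b+1) (c+1) * hyp2F1_fps a (b-1) (c-1) - (hyp2F1_fps a b c)^2)"
proof -
  define F where "F = hyp2F1_fps a (b+1) (c+1)"
  define G where "G = hyp2F1_fps a (b-1) (c-1)"
  define H where "H = hyp2F1_fps a b c"
  define A where "A = (fps_const a :: complex fps)"
  define B where "B = (fps_const b :: complex fps)"
  define C where "C = (fps_const c :: complex fps)"
  define X where "X = (fps_X :: complex fps)"
  have dA: "fps_deriv A = 0" "fps_deriv B = 0" "fps_deriv C = 0" "fps_deriv X = 1"
    unfolding A_def B_def C_def X_def by simp_all
  have hb: "B = A - C + 1" using assms(3) unfolding A_def B_def C_def by simp
  have h1: "C*H = (C - A*X)*F + X*(1-X)*fps_deriv F"
    using hyp2F1_fps_contiguous[OF adm adm_succ, where b=b] unfolding A_def C_def X_def F_def H_def .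
  have const: "fps_const (c-1) = C - 1" "fps_const (c+1) = C + 1" "fps_const (a*(b+1)) = A*(B+1)"
      "fps_const (a+(b+1)+1) = A+(B+1)+1"
    unfolding A_def B_def C_def by (metis fps_const_1_eq_1 fps_const_add fps_const_sub fps_const_mult)+
  have h2: "(C-1)*G = (C-1-A*X)*H + X*(1-X)*fps_deriv H"
    using hyp2F1_fps_contiguous[OF adm_pred, where b="b-1"] adm
    unfolding A_def X_def G_def H_def const(1)[symmetric] by simp
  have ode: "X*(1-X)*fps_deriv (fps_deriv F) = A*(B+1)*F - (C+1 - (A+(B+1)+1)*X)*fps_deriv F"
    using hyp2F1_fps_ode[OF adm_succ, where b="b+1"] unfolding const X_def F_def .
  have hH1: "C*fps_deriv H = B*(A*F + X*fps_deriv F)"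
  proof (rule deriv_contiguous_by_ode[OF _ ode])
    show "C*fps_deriv H = -A*F + (C - A*X)*fps_deriv F + (1-X-X)*fps_deriv F
        + X*(1-X)*fps_deriv (fps_deriv F)"
      using arg_cong[OF h1, of fps_deriv] by (simp add: dA algebra_simps)
  qed
  have hH2: "C*fps_deriv (fps_deriv H) = B*((A+1)*fps_deriv F + X*fps_deriv (fps_deriv F))"
    using arg_cong[OF hH1, of fps_deriv] by (simp add: dA algebra_simps)
  have h2d: "(C-1)*fps_deriv G = -A*H + (C-1-A*X)*fps_deriv H + (1-X-X)*fps_deriv H
      + X*(1-X)*fps_deriv (fps_deriv H)"
    using arg_cong[OF h2, of fps_deriv] by (simp add: dA algebra_simps)
  have "C*(C-1)*(X*(F*fps_deriv G - fps_deriv F*G)) = C*(C-1)*(C*(F*G - H*H))"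
    by (rule wronskian_by_contiguous[OF hb h1 hH1 hH2 h2 h2d ode])
  moreover have "C*(C-1) \<noteq> 0" using assms(1,2) unfolding C_def by simp
  ultimately have "X*(F*fps_deriv G - fps_deriv F*G) = C*(F*G - H*H)" by simp
  then show ?thesis unfolding F_def G_def H_def C_def X_def by (simp add: power2_eq_square)
qed

lemma hyp2F1_eq_eval_fps: "hyp2F1 a b c = eval_fps (hyp2F1_fps a b c)"
  by (simp add: fun_eq_iff hyp2F1_def eval_fps_def hyp2F1_fps_def hyp2F1_coeff_def field_simps)

lemma fps_conv_radius_hyp2F1_terminating:
  assumes "a = - of_nat n"
  shows "fps_conv_radius (hyp2F1_fps a b c) = \<infinity>"
proof -
  have "eventually (\<lambda>k. hyp2F1_coeff a b c k = 0) sequentially"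
    unfolding eventually_sequentially assms
    by (intro exI[of _ "Suc n"] allI impI hyp2F1_coeff_eq_0) (simp add: pochhammer_of_nat_eq_0_iff)
  then have "conv_radius (hyp2F1_coeff a b c) = conv_radius (\<lambda>_. 0::complex)"
    by (rule conv_radius_cong')
  then show ?thesis by (simp add: fps_conv_radius_def hyp2F1_fps_def)
qed

lemma hyp2F1_coeff_ratio_tendsto:
  fixes a b c :: complex
  shows "(\<lambda>n. norm ((a + of_nat n) * (b + of_nat n) / ((c + of_nat n) * of_nat (Suc n)))) \<longlonglongrightarrow> 1"
proof -
  let ?r = "\<lambda>n. ((1 + a / of_nat n) * (1 + b / of_nat n)) / ((1 + c / of_nat n) * (1 + 1 / of_nat n))"
  have "?r \<longlonglongrightarrow> ((1 + 0) * (1 + 0)) / ((1 + 0) * (1 + 0))"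
    by (intro tendsto_intros) auto
  moreover have "eventually (\<lambda>n. ?r n = (a + of_nat n) * (b + of_nat n) / ((c + of_nat n) * of_nat (Suc n)))
      sequentially"
    unfolding eventually_sequentially
  proof (intro exI[of _ 1] allI impI)
    fix n :: nat assume "n \<ge> 1"
    then have n: "(of_nat n :: complex) \<noteq> 0" by simp
    have "(1 + a / of_nat n) * (1 + b / of_nat n) = (a + of_nat n) * (b + of_nat n) / (of_nat n * of_nat n)"
      "(1 + c / of_nat n) * (1 + 1 / of_nat n) = (c + of_nat n) * of_nat (Suc n) / (of_nat n * of_nat n)"
      using n by (simp_all add: field_simps)
    then show "?r n = (a + of_nat n) * (b + of_nat n) / ((c + of_nat n) * of_nat (Suc n))"
      using n by simp
  qed
  ultimately have "(\<lambda>n. (a + of_nat n) * (b + of_nat n) / ((c + of_nat n) * of_nat (Suc n))) \<longlonglongrightarrow> 1"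
    by (simp add: tendsto_cong)
  then show ?thesis using tendsto_norm by fastforce
qed

lemma fps_conv_radius_hyp2F1_ge_1:
  assumes cn: "\<And>k. c + of_nat k \<noteq> 0"
  shows "fps_conv_radius (hyp2F1_fps a b c) \<ge> 1"
proof -
  define \<rho> where "\<rho> n = (a + of_nat n) * (b + of_nat n) / ((c + of_nat n) * of_nat (Suc n))" for n
  have coeff_Suc: "hyp2F1_coeff a b c (Suc k) = \<rho> k * hyp2F1_coeff a b c k" for k
  proof -
    have "(c + of_nat k) * of_nat (Suc k) \<noteq> 0" using cn[of k] of_nat_neq_0 by simp
    moreover have "hyp2F1_admissible a c" using cn by (simp add: hyp2F1_admissible_def)
    ultimately show ?thesis
      using hyp2F1_coeff_Suc[of a c b k] by (simp add: \<rho>_def field_simps)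
  qed
  show ?thesis unfolding fps_conv_radius_def hyp2F1_fps_def fps_nth_Abs_fps one_ereal_def
  proof (rule conv_radius_geI_ex')
    fix r :: real assume r: "0 < r" "ereal r < ereal 1"
    define q where "q = (1 + r) / 2"
    have "q < 1" "1 < q / r" using r by (auto simp: q_def field_simps)
    obtain N where N: "\<And>n. n \<ge> N \<Longrightarrow> norm (\<rho> n) < q / r"
      using order_tendstoD(2)[OF hyp2F1_coeff_ratio_tendsto \<open>1 < q / r\<close>]
      unfolding eventually_sequentially \<rho>_def by blast
    show "summable (\<lambda>n. hyp2F1_coeff a b c n * of_real r ^ n)"
    proof (rule summable_ratio_test[OF \<open>q < 1\<close>])
      fix n assume "n \<ge> N"
      have "norm (hyp2F1_coeff a b c (Suc n) * of_real r ^ Suc n)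
          = (norm (\<rho> n) * r) * norm (hyp2F1_coeff a b c n * of_real r ^ n)"
        using r by (simp add: coeff_Suc norm_mult norm_power)
      also have "\<dots> \<le> q * norm (hyp2F1_coeff a b c n * of_real r ^ n)"
        using N[OF \<open>n \<ge> N\<close>] r by (intro mult_right_mono) (simp_all add: field_simps)
      finally show "norm (hyp2F1_coeff a b c (Suc n) * of_real r ^ Suc n)
          \<le> q * norm (hyp2F1_coeff a b c n * of_real r ^ n)" .
    qed
  qed
qed

lemma fps_conv_radius_mult_gt:
  fixes f g :: "complex fps"
  shows "norm z < fps_conv_radius f \<Longrightarrow> norm z < fps_conv_radius g \<Longrightarrow> norm z < fps_conv_radius (f * g)"
  using fps_conv_radius_mult[of f g] by (meson less_le_trans min_less_iff_conj)

lemma fps_conv_radius_diff_gt: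
  fixes f g :: "complex fps"
  shows "norm z < fps_conv_radius f \<Longrightarrow> norm z < fps_conv_radius g \<Longrightarrow> norm z < fps_conv_radius (f - g)"
  using fps_conv_radius_diff[of f g] by (meson less_le_trans min_less_iff_conj)

lemma fps_conv_radius_deriv_gt:
  fixes f :: "complex fps"
  shows "norm z < fps_conv_radius f \<Longrightarrow> norm z < fps_conv_radius (fps_deriv f)"
  using fps_conv_radius_deriv[of f] by (meson less_le_trans)

lemma eval_fps_wronskian:
  fixes F G H :: "complex fps"
  assumes rF: "norm z < fps_conv_radius F" and rG: "norm z < fps_conv_radius G"
    and rH: "norm z < fps_conv_radius H"
    and eq: "fps_X * (F * fps_deriv G - fps_deriv F * G) = fps_const c * (F * G - H^2)"
  shows "z * (eval_fps F z * deriv (eval_fps G) z - deriv (eval_fps F) z * eval_fps G z)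
       = c * (eval_fps F z * eval_fps G z - (eval_fps H z)^2)"
proof -
  have rD: "norm z < fps_conv_radius (fps_deriv F)" "norm z < fps_conv_radius (fps_deriv G)"
    using rF rG by (simp_all add: fps_conv_radius_deriv_gt)
  have r1: "norm z < fps_conv_radius (F * fps_deriv G)" "norm z < fps_conv_radius (fps_deriv F * G)"
    "norm z < fps_conv_radius (F * G)" "norm z < fps_conv_radius (H * H)"
    using rF rG rH rD by (simp_all add: fps_conv_radius_mult_gt)
  have r2: "norm z < fps_conv_radius (F * fps_deriv G - fps_deriv F * G)"
    "norm z < fps_conv_radius (F * G - H * H)"
    using r1 by (simp_all add: fps_conv_radius_diff_gt)
  have "eval_fps (fps_X * (F * fps_deriv G - fps_deriv F * G)) z = eval_fps (fps_const c * (F * G - H * H)) z"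
    using eq by (simp add: power2_eq_square)
  then show ?thesis
    using rF rG rH rD r1 r2
    by (simp add: eval_fps_deriv eval_fps_mult eval_fps_diff power2_eq_square)
qed

lemma hyp2F1_wronskian:
  assumes "c \<noteq> 0" and "c \<noteq> 1" and "b = a - c + 1"
    and "hyp2F1_admissible a (c-1)" and "hyp2F1_admissible a c" and "hyp2F1_admissible a (c+1)"
    and "norm z < fps_conv_radius (hyp2F1_fps a (b+1) (c+1))"
    and "norm z < fps_conv_radius (hyp2F1_fps a (b-1) (c-1))"
    and "norm z < fps_conv_radius (hyp2F1_fps a b c)"
  shows "z * (hyp2F1 a (b+1) (c+1) z * deriv (hyp2F1 a (b-1) (c-1)) z
              - deriv (hyp2F1 a (b+1) (c+1)) z * hyp2F1 a (b-1) (c-1) z)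
         = c * (hyp2F1 a (b+1) (c+1) z * hyp2F1 a (b-1) (c-1) z - (hyp2F1 a b c z)\<^sup>2)"
  unfolding hyp2F1_eq_eval_fps
  using assms(7-9) hyp2F1_fps_wronskian[OF assms(1-6)] by (rule eval_fps_wronskian)

lemma hyp2F1_wronskian_terminating:
  assumes a: "a = - of_nat n" and "b = a - c + 1"
    and c: "\<forall>k::int. - int n \<le> k \<and> k \<le> 1 \<longrightarrow> c \<noteq> of_int k"
  shows "z * (hyp2F1 a (b+1) (c+1) z * deriv (hyp2F1 a (b-1) (c-1)) z
              - deriv (hyp2F1 a (b+1) (c+1)) z * hyp2F1 a (b-1) (c-1) z)
         = c * (hyp2F1 a (b+1) (c+1) z * hyp2F1 a (b-1) (c-1) z - (hyp2F1 a b c z)\<^sup>2)"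
proof (rule hyp2F1_wronskian)
  show "c \<noteq> 0" "c \<noteq> 1" using c[rule_format, of 0] c[rule_format, of 1] by simp_all
  have "c + of_int j \<noteq> - of_nat k" if "j \<in> {-1, 0, 1}" "k < n" for j k
    using c[rule_format, of "- int k - j"] that by (auto simp: algebra_simps)
  then show "hyp2F1_admissible a (c-1)" "hyp2F1_admissible a c" "hyp2F1_admissible a (c+1)"
    using hyp2F1_admissible_terminating[OF a, of "c + of_int _"] by force+
  from fps_conv_radius_hyp2F1_terminating[OF a]
  show "norm z < fps_conv_radius (hyp2F1_fps a (b+1) (c+1))"
    "norm z < fps_conv_radius (hyp2F1_fps a (b-1) (c-1))" "norm z < fps_conv_radius (hyp2F1_fps a b c)"
    by simp_all
qed fact

lemma hyp2F1_wronskian_disc: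
  assumes "b = a - c + 1" and c: "\<forall>m::nat. m \<ge> 1 \<longrightarrow> 2 - c \<noteq> of_nat m" and "norm z < 1"
  shows "z * (hyp2F1 a (b+1) (c+1) z * deriv (hyp2F1 a (b-1) (c-1)) z
              - deriv (hyp2F1 a (b+1) (c+1)) z * hyp2F1 a (b-1) (c-1) z)
         = c * (hyp2F1 a (b+1) (c+1) z * hyp2F1 a (b-1) (c-1) z - (hyp2F1 a b c z)\<^sup>2)"
proof -
  have cm: "c - 1 + of_nat k \<noteq> 0" for k
    using c[rule_format, of "Suc k"] by (auto simp: algebra_simps)
  have c0: "c + of_nat k \<noteq> 0" and c1: "c + 1 + of_nat k \<noteq> 0" for k
    using cm[of "Suc k"] cm[of "Suc (Suc k)"] by (simp_all add: algebra_simps)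
  have "ereal (norm z) < 1" using \<open>norm z < 1\<close> by simp
  then have "norm z < fps_conv_radius (hyp2F1_fps a b' c')" if "\<And>k. c' + of_nat k \<noteq> 0" for b' c'
    using fps_conv_radius_hyp2F1_ge_1[OF that] by (rule less_le_trans)
  then show ?thesis
    using cm[of 0] c0[of 0] c0 c1 cm assms(1)
    by (intro hyp2F1_wronskian) (simp_all add: hyp2F1_admissible_def)
qed

theorem lemma5:
  fixes a b c z :: complex
  assumes hc: "c = a - b + 1"
    and hneg: "\<And>n::nat. n > 0 \<Longrightarrow> a = - of_nat n \<Longrightarrow>
                 (\<forall>k::int. - int n \<le> k \<and> k \<le> 1 \<longrightarrow> c \<noteq> of_int k)"
    and hgen: "\<not> (\<exists>n::nat. n > 0 \<and> a = - of_nat n) \<Longrightarrow>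
                 (\<forall>m::nat. m \<ge> 1 \<longrightarrow> 2 - c \<noteq> of_nat m)"
    and hz: "(\<exists>n::nat. n > 0 \<and> a = - of_nat n) \<or> norm z < 1"
  shows "z * (hyp2F1 a (b+1) (c+1) z * deriv (hyp2F1 a (b-1) (c-1)) z
              - deriv (hyp2F1 a (b+1) (c+1)) z * hyp2F1 a (b-1) (c-1) z)
         = c * (hyp2F1 a (b+1) (c+1) z * hyp2F1 a (b-1) (c-1) z - (hyp2F1 a b c z)\<^sup>2)"
proof -
  have hb: "b = a - c + 1" using hc by simp
  show ?thesis
  proof (cases "\<exists>n::nat. n > 0 \<and> a = - of_nat n")
    case True
    then obtain n :: nat where "n > 0" "a = - of_nat n" by blast
    then show ?thesis using hneg hb by (intro hyp2F1_wronskian_terminating) simp_all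
  next
    case False
    with hz have "norm z < 1" by blast
    with False show ?thesis using hgen hb by (intro hyp2F1_wronskian_disc) simp_all
  qed
qed

end
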